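(* Let $S$ be a measurable space containing a distinguished element $0$, let $(\epsilon_i)_{i\in\mathbb{Z}}$ be an i.i.d. sequence of $S$-valued random variables, and let $f:S^\infty\to\mathbb{R}$ be bounded, with $\|f\|_\infty=\sup|f|<\infty$, satisfying: there is a decreasing sequence $(c_m)_{m\in\mathbb{N}}$ tending to $0$ such that for all $m$ and all $a_1,\ldots,a_{m+1},x_i,y_i\in S$ ($i\le 0$), $$|f(a_{m+1},\ldots,a_1,x_0,x_{-1},\ldots)-f(a_{m+1},\ldots,a_1,y_0,y_{-1},\ldots)|\le c_m\,|f(x_0,x_{-1},\ldots)-f(y_0,y_{-1},\ldots)|.$$ Define $X_n=f(\epsilon_n,\epsilon_{n-1},\ldots)$ and $X_n^{(m)}=f(\epsilon_n,\ldots,\epsilon_{n-m},0,0,\ldots)$ for $n\in\mathbb{Z}$. Let $\epsilon>0$ and let $m\in\mathbb{N}$ satisfy $2c_m\|f\|_\infty<\epsilon$. Then for every $n\ge1$, $d_H(\mathbb{X}_n^{(m)},\mathbb{X}_n)<\epsilon$ almost surely, where $\mathbb{X}_n=\{X_1,\ldots,X_n\}$ and $\mathbb{X}_n^{(m)}=\{X^{(m)}_1,\ldots,X^{(m)}_n\}$.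
   Context: $d_H$ is the Hausdorff distance between finite subsets of $\mathbb{R}$: $d_H(A,B)=\max(\max_{x\in A}\min_{y\in B}|x-y|,\max_{x\in B}\min_{y\in A}|x-y|)$. *)

theory Defs
  imports "HOL-Probability.Probability"
begin

definition hausdorff_dist :: "real set \<Rightarrow> real set \<Rightarrow> real" where
  "hausdorff_dist A B =
     max (Max ((\<lambda>x. Min ((\<lambda>y. \<bar>x - y\<bar>) ` B)) ` A))
         (Max ((\<lambda>x. Min ((\<lambda>y. \<bar>x - y\<bar>) ` A)) ` B))"

text \<open>S^infinity: sequences (s 0, s 1, ...) with all entries in the space of N.
  The sequence (x_0, x_{-1}, ...) is represented by k \<mapsto> x_{-k}.\<close>
definition seq_space :: "'a measure \<Rightarrow> (nat \<Rightarrow> 'a) set" where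
  "seq_space N = {s. \<forall>k. s k \<in> space N}"

definition sup_norm_seq :: "'a measure \<Rightarrow> ((nat \<Rightarrow> 'a) \<Rightarrow> real) \<Rightarrow> real" where
  "sup_norm_seq N f = (SUP s\<in>seq_space N. \<bar>f s\<bar>)"

text \<open>Prepending m+1 entries a 0, ..., a m (= a_{m+1}, ..., a_1) to a sequence x.\<close>
definition prepend :: "nat \<Rightarrow> (nat \<Rightarrow> 'a) \<Rightarrow> (nat \<Rightarrow> 'a) \<Rightarrow> (nat \<Rightarrow> 'a)" where
  "prepend m a x = (\<lambda>k. if k \<le> m then a k else x (k - Suc m))"

end

theory Submission
  imports Defs
begin

text \<open>For each i the paths of X_i and its truncation X_i^(m) agree in their first m + 1 entries,
  so the contraction hypothesis bounds their difference by c_m times the difference of two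
  values of f, hence by 2 c_m sup|f| < e. Two finite sets indexed alike whose corresponding
  points are e-close are at Hausdorff distance less than e.\<close>

lemma Max_Min_dist_image_less:
  fixes g h :: "'i \<Rightarrow> real"
  assumes "finite I" "I \<noteq> {}" "\<And>i. i \<in> I \<Longrightarrow> \<bar>g i - h i\<bar> < e"
  shows "Max ((\<lambda>x. Min ((\<lambda>y. \<bar>x - y\<bar>) ` h ` I)) ` g ` I) < e"
proof (subst Max_less_iff)
  show "\<forall>d \<in> (\<lambda>x. Min ((\<lambda>y. \<bar>x - y\<bar>) ` h ` I)) ` g ` I. d < e"
  proof
    fix d assume "d \<in> (\<lambda>x. Min ((\<lambda>y. \<bar>x - y\<bar>) ` h ` I)) ` g ` I"
    then obtain i where i: "i \<in> I" and d: "d = Min ((\<lambda>y. \<bar>g i - y\<bar>) ` h ` I)"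
      by auto
    have "d \<le> \<bar>g i - h i\<bar>"
      using i d assms(1) by (auto intro!: Min_le)
    with assms(3)[OF i] show "d < e" by linarith
  qed
qed (use assms in auto)

lemma hausdorff_dist_image_less:
  fixes g h :: "'i \<Rightarrow> real"
  assumes "finite I" "I \<noteq> {}" "\<And>i. i \<in> I \<Longrightarrow> \<bar>g i - h i\<bar> < e"
  shows "hausdorff_dist (g ` I) (h ` I) < e"
proof -
  have "\<And>i. i \<in> I \<Longrightarrow> \<bar>h i - g i\<bar> < e"
    using assms(3) by (simp add: abs_minus_commute)
  then show ?thesis
    unfolding hausdorff_dist_def
    using Max_Min_dist_image_less[OF assms] Max_Min_dist_image_less[OF assms(1,2)]
    by simp
qed

lemma abs_le_sup_norm_seq:
  assumes "bdd_above ((\<lambda>s. \<bar>f s\<bar>) ` seq_space N)" "s \<in> seq_space N"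
  shows "\<bar>f s\<bar> \<le> sup_norm_seq N f"
  unfolding sup_norm_seq_def using assms by (auto intro: cSUP_upper)

lemma prepend_truncation:
  "(\<lambda>k. if k \<le> m then s k else z) = prepend m s (\<lambda>_. z)"
  by (auto simp: prepend_def)

lemma prepend_shift:
  "s = prepend m s (\<lambda>k. s (k + Suc m))"
  by (rule ext) (auto simp: prepend_def)

lemma prepend_diff_le_sup_norm:
  assumes bdd: "bdd_above ((\<lambda>s. \<bar>f s\<bar>) ` seq_space N)"
    and contract: "\<And>a x y. a \<in> seq_space N \<Longrightarrow> x \<in> seq_space N \<Longrightarrow> y \<in> seq_space N \<Longrightarrow>
           \<bar>f (prepend m a x) - f (prepend m a y)\<bar> \<le> c * \<bar>f x - f y\<bar>"
    and "c \<ge> 0" "a \<in> seq_space N" "x \<in> seq_space N" "y \<in> seq_space N"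
  shows "\<bar>f (prepend m a x) - f (prepend m a y)\<bar> \<le> 2 * c * sup_norm_seq N f"
proof -
  have "\<bar>f x - f y\<bar> \<le> 2 * sup_norm_seq N f"
    using abs_le_sup_norm_seq[OF bdd, of x] abs_le_sup_norm_seq[OF bdd, of y] assms(5,6)
    by linarith
  then have "c * \<bar>f x - f y\<bar> \<le> c * (2 * sup_norm_seq N f)"
    using \<open>c \<ge> 0\<close> by (rule mult_left_mono)
  then show ?thesis
    using contract[OF assms(4-6)] by linarith
qed

theorem lemma4p1:
  fixes M :: "'w measure" and N :: "'a measure" and z :: 'a
    and eps :: "int \<Rightarrow> 'w \<Rightarrow> 'a" and f :: "(nat \<Rightarrow> 'a) \<Rightarrow> real"
    and c :: "nat \<Rightarrow> real" and e :: real and m :: nat and n :: nat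
  assumes "prob_space M"
    and "z \<in> space N"
    and "prob_space.indep_vars M (\<lambda>_. N) eps UNIV"
    and "\<And>i j. distr M N (eps i) = distr M N (eps j)"
    and "bdd_above ((\<lambda>s. \<bar>f s\<bar>) ` seq_space N)"
    and "decseq c" and "c \<longlonglongrightarrow> 0"
    and "\<And>m a x y. a \<in> seq_space N \<Longrightarrow> x \<in> seq_space N \<Longrightarrow> y \<in> seq_space N \<Longrightarrow>
           \<bar>f (prepend m a x) - f (prepend m a y)\<bar> \<le> c m * \<bar>f x - f y\<bar>"
    and "e > 0"
    and "2 * c m * sup_norm_seq N f < e"
    and "n \<ge> 1"
  shows "AE \<omega> in M.
           hausdorff_dist
             ((\<lambda>i. f (\<lambda>k. if k \<le> m then eps (i - int k) \<omega> else z)) ` {1..int n})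
             ((\<lambda>i. f (\<lambda>k. eps (i - int k) \<omega>)) ` {1..int n}) < e"
proof (rule AE_I2, rule hausdorff_dist_image_less)
  fix \<omega> i assume "\<omega> \<in> space M"
  moreover have "eps j \<in> measurable M N" for j
    using assms(1,3) by (simp add: prob_space.indep_vars_def)
  ultimately have "eps j \<omega> \<in> space N" for j
    by (auto simp: measurable_def)
  then have path: "(\<lambda>k. eps (i - int k) \<omega>) \<in> seq_space N"
    and tail: "(\<lambda>k. eps (i - int (k + Suc m)) \<omega>) \<in> seq_space N"
    and const: "(\<lambda>_. z) \<in> seq_space N"
    using assms(2) by (auto simp: seq_space_def)
  have "c m \<ge> 0"
    using assms(6,7) by (rule decseq_ge)
  from prepend_diff_le_sup_norm[OF assms(5) assms(8) this path const tail]
  have "\<bar>f (prepend m (\<lambda>k. eps (i - int k) \<omega>) (\<lambda>_. z))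
          - f (prepend m (\<lambda>k. eps (i - int k) \<omega>) (\<lambda>k. eps (i - int (k + Suc m)) \<omega>))\<bar>
        \<le> 2 * c m * sup_norm_seq N f" .
  then show "\<bar>f (\<lambda>k. if k \<le> m then eps (i - int k) \<omega> else z) - f (\<lambda>k. eps (i - int k) \<omega>)\<bar> < e"
    unfolding prepend_truncation prepend_shift[of "\<lambda>k. eps (i - int k) \<omega>" m, symmetric]
    using assms(10) by linarith
qed (use assms(11) in auto)

end
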